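(* Let $(N_0,c,w,P)$ be an RS-situation and $(N_0,v)$ the corresponding RS-game. Then \[Core(N_0,v)=\Big\{x\in\mathbb{R}^{N_0}\ \Big|\ \sum_{i\in N_0}x_i=v(N_0);\ x_i\le v(\{0,i\})\text{ for all } i\in N;\ \sum_{i\in S}x_i\ge v(S)\text{ for all } S\subseteq N\Big\}.\]
   Context: Let $c\in\mathbb{R}$. An RS-problem is a triple $(c,w,p)$ where $w:\mathbb{R}_+\to(c,+\infty)$ is decreasing (non-increasing) and continuous, and $p:\mathbb{R}_+\to\mathbb{R}$ is decreasing (non-increasing) and continuous, satisfies $p(0)>w(0)$, and there exists $q>0$ with $p(q)=c$. An RS-situation is a tuple $(N_0,c,w,P)$ where $N=\{1,\dots,n\}$ is the set of retailers, $0$ denotes the supplier, $N_0=N\cup\{0\}$, $P=(p_1,\dots,p_n)$, and $(c,w,p_i)$ is an RS-problem for each $i\in N$. For $S\subseteq N$ write $S_0=S\cup\{0\}$. For $q\ge0$ and $\omega\in\mathbb{R}$, $\Pi_i^{ret}(q;\omega)=(p_i(q)-\omega)q$. For nonempty $S\subseteq N$, $(q_i^S)_{i\in S}$ is a fixed optimal solution of: maximize $\sum_{i\in S}(p_i(q_i)-w(q_S))q_i$ over $q\in\mathbb{R}_+^{S}$ subject to $p_i(q_i)\ge w(q_S)$ for all $i\in S$, where $q_S=\sum_{i\in S}q_i$; $q_S^S=\sum_{i\in S}q_i^S$. For $i\in N$, $q_i^c$ is a fixed optimal solution of: maximize $(p_i(q)-c)q$ over $q\ge0$ subject to $p_i(q)\ge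 c$. The corresponding RS-game $(N_0,v)$ is the TU game on $N_0$ with $v(\emptyset)=0$ and, for all $S\subseteq N$, $v(S)=\sum_{i\in S}\Pi_i^{ret}(q_i^S;w(q_S^S))$ and $v(S_0)=\sum_{i\in S}\Pi_i^{ret}(q_i^c;c)$. The core of a TU game $(N_0,v)$ is $Core(N_0,v)=\{x\in\mathbb{R}^{N_0}: \sum_{i\in N_0}x_i=v(N_0),\ \sum_{i\in T}x_i\ge v(T)\text{ for all }T\subset N_0\}$. *)

theory Defs
  imports Complex_Main
begin

text \<open>Players are natural numbers: supplier 0, retailers 1..n. Payoff vectors are
  functions nat \<Rightarrow> real (only values on the player set matter).\<close>

definition rs_problem :: "real \<Rightarrow> (real \<Rightarrow> real) \<Rightarrow> (real \<Rightarrow> real) \<Rightarrow> bool" where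
  "rs_problem c w p \<longleftrightarrow>
     (\<forall>q\<ge>0. w q > c) \<and>
     (\<forall>x y. 0 \<le> x \<longrightarrow> x \<le> y \<longrightarrow> w y \<le> w x) \<and>
     continuous_on {0..} w \<and>
     (\<forall>x y. 0 \<le> x \<longrightarrow> x \<le> y \<longrightarrow> p y \<le> p x) \<and>
     continuous_on {0..} p \<and>
     p 0 > w 0 \<and>
     (\<exists>q>0. p q = c)"

definition rs_situation :: "nat \<Rightarrow> real \<Rightarrow> (real \<Rightarrow> real) \<Rightarrow> (nat \<Rightarrow> real \<Rightarrow> real) \<Rightarrow> bool" where
  "rs_situation n c w P \<longleftrightarrow> (\<forall>i\<in>{1..n}. rs_problem c w (P i))"

definition retailer_profit :: "(real \<Rightarrow> real) \<Rightarrow> real \<Rightarrow> real \<Rightarrow> real" where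
  "retailer_profit p q \<omega> = (p q - \<omega>) * q"

definition coal_feasible :: "(real \<Rightarrow> real) \<Rightarrow> (nat \<Rightarrow> real \<Rightarrow> real) \<Rightarrow> nat set \<Rightarrow> (nat \<Rightarrow> real) \<Rightarrow> bool" where
  "coal_feasible w P S q \<longleftrightarrow> (\<forall>i\<in>S. 0 \<le> q i \<and> P i (q i) \<ge> w (\<Sum>j\<in>S. q j))"

definition coal_obj :: "(real \<Rightarrow> real) \<Rightarrow> (nat \<Rightarrow> real \<Rightarrow> real) \<Rightarrow> nat set \<Rightarrow> (nat \<Rightarrow> real) \<Rightarrow> real" where
  "coal_obj w P S q = (\<Sum>i\<in>S. (P i (q i) - w (\<Sum>j\<in>S. q j)) * q i)"

definition coal_optimal :: "(real \<Rightarrow> real) \<Rightarrow> (nat \<Rightarrow> real \<Rightarrow> real) \<Rightarrow> nat set \<Rightarrow> (nat \<Rightarrow> real) \<Rightarrow> bool" where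
  "coal_optimal w P S q \<longleftrightarrow> coal_feasible w P S q \<and>
     (\<forall>q'. coal_feasible w P S q' \<longrightarrow> coal_obj w P S q' \<le> coal_obj w P S q)"

definition comp_optimal :: "real \<Rightarrow> (real \<Rightarrow> real) \<Rightarrow> real \<Rightarrow> bool" where
  "comp_optimal c p q \<longleftrightarrow> 0 \<le> q \<and> p q \<ge> c \<and>
     (\<forall>q'. 0 \<le> q' \<and> p q' \<ge> c \<longrightarrow> (p q' - c) * q' \<le> (p q - c) * q)"

text \<open>RS-game: qS S is the fixed optimal solution for coalition S of retailers,
  qc i the fixed optimal quantity of retailer i under price c.\<close>
definition rs_game :: "real \<Rightarrow> (real \<Rightarrow> real) \<Rightarrow> (nat \<Rightarrow> real \<Rightarrow> real) \<Rightarrow>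
    (nat set \<Rightarrow> nat \<Rightarrow> real) \<Rightarrow> (nat \<Rightarrow> real) \<Rightarrow> nat set \<Rightarrow> real" where
  "rs_game c w P qS qc T =
     (if 0 \<in> T then (\<Sum>i\<in>T - {0}. retailer_profit (P i) (qc i) c)
      else (\<Sum>i\<in>T. retailer_profit (P i) (qS T i) (w (\<Sum>j\<in>T. qS T j))))"

definition core :: "nat set \<Rightarrow> (nat set \<Rightarrow> real) \<Rightarrow> (nat \<Rightarrow> real) set" where
  "core N0 v = {x. (\<Sum>i\<in>N0. x i) = v N0 \<and> (\<forall>T. T \<subset> N0 \<longrightarrow> (\<Sum>i\<in>T. x i) \<ge> v T)}"

end

theory Submission
  imports Defs
begin

text \<open>Every coalition containing the supplier earns the sum of the stand-alone profits
  of its retailers, so on such coalitions the game is additive. For an efficient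
  allocation, the excess of a coalition T containing the supplier is therefore the sum of
  the shortfalls v({0,i}) - x i over the retailers i outside T. All these excesses are
  nonnegative exactly when every single shortfall is, which is the upper bound
  x i \<le> v({0,i}); the coalitions without the supplier give the remaining constraints.\<close>

lemma excess_supplier_coalition:
  fixes x a :: "nat \<Rightarrow> real"
  assumes "finite N" "s \<notin> N" "s \<in> T" "T \<subseteq> insert s N"
    and efficient: "(\<Sum>i\<in>insert s N. x i) = (\<Sum>i\<in>N. a i)"
  shows "(\<Sum>i\<in>T. x i) - (\<Sum>i\<in>T - {s}. a i) = (\<Sum>i\<in>insert s N - T. a i - x i)"
proof -
  let ?R = "insert s N - T"
  have fin: "finite T" "finite ?R"
    using assms(1,4) finite_subset by auto
  have "(\<Sum>i\<in>insert s N. x i) = (\<Sum>i\<in>T \<union> ?R. x i)"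
    using assms(4) by (intro sum.cong) auto
  also have "\<dots> = (\<Sum>i\<in>T. x i) + (\<Sum>i\<in>?R. x i)"
    using fin by (intro sum.union_disjoint) auto
  finally have x_split: "(\<Sum>i\<in>insert s N. x i) = (\<Sum>i\<in>T. x i) + (\<Sum>i\<in>?R. x i)" .
  have "(\<Sum>i\<in>N. a i) = (\<Sum>i\<in>(T - {s}) \<union> ?R. a i)"
    using assms(2-4) by (intro sum.cong) auto
  also have "\<dots> = (\<Sum>i\<in>T - {s}. a i) + (\<Sum>i\<in>?R. a i)"
    using fin by (intro sum.union_disjoint) auto
  finally have a_split: "(\<Sum>i\<in>N. a i) = (\<Sum>i\<in>T - {s}. a i) + (\<Sum>i\<in>?R. a i)" .
  show ?thesis
    using efficient x_split a_split by (simp add: sum_subtractf)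
qed

lemma core_supplier_additive_game:
  fixes v :: "nat set \<Rightarrow> real" and a :: "nat \<Rightarrow> real"
  assumes "finite N" "s \<notin> N"
    and v_supplier: "\<And>T. s \<in> T \<Longrightarrow> T \<subseteq> insert s N \<Longrightarrow> v T = (\<Sum>i\<in>T - {s}. a i)"
  shows "core (insert s N) v =
    {x. (\<Sum>i\<in>insert s N. x i) = v (insert s N) \<and>
        (\<forall>i\<in>N. x i \<le> v {s, i}) \<and>
        (\<forall>S. S \<subseteq> N \<longrightarrow> (\<Sum>i\<in>S. x i) \<ge> v S)}"
    (is "_ = ?C")
proof -
  have v_grand: "v (insert s N) = (\<Sum>i\<in>N. a i)"
    using v_supplier[of "insert s N"] assms(2) by simp
  have v_pair: "v {s, i} = a i" if "i \<in> N" for i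
  proof -
    have "{s, i} - {s} = {i}"
      using that assms(2) by auto
    then show ?thesis
      using v_supplier[of "{s, i}"] that assms(2) by simp
  qed
  have excess: "(\<Sum>i\<in>T. x i) - v T = (\<Sum>i\<in>insert s N - T. a i - x i)"
    if "(\<Sum>i\<in>insert s N. x i) = v (insert s N)" "s \<in> T" "T \<subseteq> insert s N"
    for x :: "nat \<Rightarrow> real" and T
    using excess_supplier_coalition[OF assms(1,2) that(2,3)] that v_grand v_supplier[OF that(2,3)]
    by simp
  show ?thesis
  proof (intro equalityI subsetI)
    fix x assume "x \<in> core (insert s N) v"
    then have efficient: "(\<Sum>i\<in>insert s N. x i) = v (insert s N)"
      and stable: "\<And>T. T \<subset> insert s N \<Longrightarrow> (\<Sum>i\<in>T. x i) \<ge> v T"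
      unfolding core_def by auto
    have "x i \<le> v {s, i}" if "i \<in> N" for i
    proof -
      let ?T = "insert s N - {i}"
      have T: "?T \<subset> insert s N" "s \<in> ?T"
        using that assms(2) by auto
      have "insert s N - ?T = {i}"
        using that by auto
      then have "(\<Sum>j\<in>?T. x j) - v ?T = a i - x i"
        using excess[OF efficient T(2)] T(1) by simp
      then show ?thesis
        using stable[OF T(1)] v_pair[OF that] by simp
    qed
    moreover have "(\<Sum>i\<in>S. x i) \<ge> v S" if "S \<subseteq> N" for S
      using stable[of S] that assms(2) by blast
    ultimately show "x \<in> ?C"
      using efficient by blast
  next
    fix x assume "x \<in> ?C"
    then have efficient: "(\<Sum>i\<in>insert s N. x i) = v (insert s N)"
      and bounded: "\<And>i. i \<in> N \<Longrightarrow> x i \<le> a i"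
      and retailers: "\<And>S. S \<subseteq> N \<Longrightarrow> (\<Sum>i\<in>S. x i) \<ge> v S"
      using v_pair by auto
    have "(\<Sum>i\<in>T. x i) \<ge> v T" if T: "T \<subset> insert s N" for T
    proof (cases "s \<in> T")
      case True
      have "0 \<le> (\<Sum>i\<in>insert s N - T. a i - x i)"
        using bounded True by (intro sum_nonneg) auto
      also have "\<dots> = (\<Sum>i\<in>T. x i) - v T"
        using excess[OF efficient True] T by simp
      finally show ?thesis by simp
    next
      case False
      then have "T \<subseteq> N"
        using T by blast
      then show ?thesis
        by (rule retailers)
    qed
    then show "x \<in> core (insert s N) v"
      unfolding core_def using efficient by blast
  qed
qed

theorem theorem5p1:
  fixes n :: nat and c :: real and w :: "real \<Rightarrow> real" and P :: "nat \<Rightarrow> real \<Rightarrow> real"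
    and qS :: "nat set \<Rightarrow> nat \<Rightarrow> real" and qc :: "nat \<Rightarrow> real"
  assumes "rs_situation n c w P"
    and "\<And>S. S \<subseteq> {1..n} \<Longrightarrow> S \<noteq> {} \<Longrightarrow> coal_optimal w P S (qS S)"
    and "\<And>i. i \<in> {1..n} \<Longrightarrow> comp_optimal c (P i) (qc i)"
  shows "core {0..n} (rs_game c w P qS qc) =
    {x. (\<Sum>i\<in>{0..n}. x i) = rs_game c w P qS qc {0..n} \<and>
        (\<forall>i\<in>{1..n}. x i \<le> rs_game c w P qS qc {0, i}) \<and>
        (\<forall>S. S \<subseteq> {1..n} \<longrightarrow> (\<Sum>i\<in>S. x i) \<ge> rs_game c w P qS qc S)}"
proof -
  have players: "{0..n} = insert 0 {1..n}"
    by auto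
  have "core (insert 0 {1..n}) (rs_game c w P qS qc) =
    {x. (\<Sum>i\<in>insert 0 {1..n}. x i) = rs_game c w P qS qc (insert 0 {1..n}) \<and>
        (\<forall>i\<in>{1..n}. x i \<le> rs_game c w P qS qc {0, i}) \<and>
        (\<forall>S. S \<subseteq> {1..n} \<longrightarrow> (\<Sum>i\<in>S. x i) \<ge> rs_game c w P qS qc S)}"
    by (rule core_supplier_additive_game[where a = "\<lambda>i. retailer_profit (P i) (qc i) c"])
      (auto simp: rs_game_def)
  then show ?thesis
    unfolding players .
qed

end
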